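(* In the setting below, suppose $\max_{g\in G_-}|\delta(g)|=E_k-\lfloor E_k\rfloor_2$. Then $|G_-|\ge \frac{|\mathrm{Co}_0|}{2}\bigl(\lceil E_k\rceil_2-E_k\bigr)$.
   Context: Let $\Lambda_{24}$ be the Leech lattice scaled so minimal vectors have length $2$, $\mathcal C$ its $196560$ minimal vectors, and $\mathrm{Co}_0$ the finite group of linear isometries of $\mathbb{R}^{24}$ mapping $\Lambda_{24}$ onto itself (acting transitively on $\mathcal C$). Fix an antipodal ($S=-S$) set $S\subseteq\mathcal C$ with $\langle x,y\rangle\le1$ for distinct $x,y\in S$. Let $k\ge1$, $S_1=S$, $g_1=\mathrm{id}$, and for $2\le j\le k$, $S_j=g_jS\setminus(S_1\cup\dots\cup S_{j-1})$ for some $g_j\in\mathrm{Co}_0$, with $|S_j|\ge|S|\bigl(1-\sum_{i<j}|S_i|/|\mathcal C|\bigr)$. Put $U_k=S_1\cup\dots\cup S_k$, $E_k=\mathbb{E}_g|gS\cap U_k|$ ($g$ uniform in $\mathrm{Co}_0$). $\lfloor x\rfloor_2$ (resp. $\lceil x\rceil_2$) is the greatest even integer $\le x$ (resp. least even integer $\ge x$). $\delta(g)=|gS\cap U_k|-E_k$, $G_-=\{g:\delta(g)<0\}$. *)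

theory Defs
  imports "HOL-Analysis.Analysis" "HOL-Library.Numeral_Type"
begin

text \<open>Cyclic binary Golay code of length 23, generated by the cyclic shifts of
  g(x) = 1 + x^2 + x^4 + x^5 + x^6 + x^10 + x^11 (codewords as supports in {0..22}),
  extended by a parity coordinate 23 to the extended Golay code of length 24.\<close>

definition golay_gen :: "nat set" where
  "golay_gen = {0, 2, 4, 5, 6, 10, 11}"

definition cshift :: "nat \<Rightarrow> nat set" where
  "cshift j = (\<lambda>i. (i + j) mod 23) ` golay_gen"

inductive_set golay23 :: "nat set set" where
  zero: "{} \<in> golay23"
| add: "A \<in> golay23 \<Longrightarrow> j < 23 \<Longrightarrow> (A - cshift j) \<union> (cshift j - A) \<in> golay23"

definition golay24 :: "nat set set" where
  "golay24 = {A \<union> (if odd (card A) then {23} else {}) | A. A \<in> golay23}"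

text \<open>The Leech lattice (Conway--Sloane construction), scaled by 1/sqrt 8 so that
  minimal vectors have length 2. Coordinate i < 24 is x \$ of_nat i.\<close>

definition leech :: "(real ^ 24) set" where
  "leech = {x. \<exists>(z :: nat \<Rightarrow> int) (m :: int).
      (\<forall>i<24. x $ (of_nat i) = real_of_int (z i) / sqrt 8 \<and> z i mod 2 = m mod 2)
    \<and> (\<Sum>i<24. z i) mod 8 = (4 * m) mod 8
    \<and> (\<forall>\<nu> :: int. {i. i < 24 \<and> z i mod 4 = \<nu> mod 4} \<in> golay24)}"

definition leech_min :: "(real ^ 24) set" where
  "leech_min = {x \<in> leech. x \<noteq> 0 \<and> (\<forall>y \<in> leech. y \<noteq> 0 \<longrightarrow> norm x \<le> norm y)}"

definition Co0 :: "(real ^ 24 \<Rightarrow> real ^ 24) set" where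
  "Co0 = {f. linear f \<and> (\<forall>x. norm (f x) = norm x) \<and> f ` leech = leech}"

primrec Useq :: "(real ^ 24) set \<Rightarrow> (nat \<Rightarrow> real ^ 24 \<Rightarrow> real ^ 24) \<Rightarrow> nat \<Rightarrow> (real ^ 24) set" where
  "Useq S gs 0 = {}"
| "Useq S gs (Suc j) = Useq S gs j \<union> gs (Suc j) ` S"

definition Sseq :: "(real ^ 24) set \<Rightarrow> (nat \<Rightarrow> real ^ 24 \<Rightarrow> real ^ 24) \<Rightarrow> nat \<Rightarrow> (real ^ 24) set" where
  "Sseq S gs j = gs j ` S - Useq S gs (j - 1)"

definition Ek :: "(real ^ 24) set \<Rightarrow> (nat \<Rightarrow> real ^ 24 \<Rightarrow> real ^ 24) \<Rightarrow> nat \<Rightarrow> real" where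
  "Ek S gs k = (\<Sum>g\<in>Co0. real (card (g ` S \<inter> Useq S gs k))) / real (card Co0)"

definition delta :: "(real ^ 24) set \<Rightarrow> (nat \<Rightarrow> real ^ 24 \<Rightarrow> real ^ 24) \<Rightarrow> nat \<Rightarrow> (real ^ 24 \<Rightarrow> real ^ 24) \<Rightarrow> real" where
  "delta S gs k g = real (card (g ` S \<inter> Useq S gs k)) - Ek S gs k"

definition Gminus :: "(real ^ 24) set \<Rightarrow> (nat \<Rightarrow> real ^ 24 \<Rightarrow> real ^ 24) \<Rightarrow> nat \<Rightarrow> (real ^ 24 \<Rightarrow> real ^ 24) set" where
  "Gminus S gs k = {g \<in> Co0. delta S gs k g < 0}"

definition floor_even :: "real \<Rightarrow> real" where
  "floor_even x = 2 * real_of_int \<lfloor>x / 2\<rfloor>"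

definition ceil_even :: "real \<Rightarrow> real" where
  "ceil_even x = 2 * real_of_int \<lceil>x / 2\<rceil>"

end

theory Submission
  imports Defs
begin

text \<open>Since S and every U_k are antipodal and avoid 0, each count |gS \<inter> U_k| is even.
  If it lies at or above the mean E_k it is therefore at least \<lceil>E_k\<rceil>_2, and by the
  hypothesis on G_- it is at least \<lfloor>E_k\<rfloor>_2 below the mean. The deviations from the
  mean sum to zero, so |G_-| (E_k - \<lfloor>E_k\<rfloor>_2) \<ge> (|Co_0| - |G_-|) (\<lceil>E_k\<rceil>_2 - E_k);
  as the two gaps add up to 2 unless \<lceil>E_k\<rceil>_2 = E_k, the bound follows.\<close>

lemma even_card_antipodal:
  fixes A :: "'a::real_vector set"
  assumes "\<forall>x\<in>A. - x \<in> A" and "0 \<notin> A"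
  shows "even (card A)"
proof (cases "finite A")
  case True
  then show ?thesis using assms
  proof (induction "card A" arbitrary: A rule: less_induct)
    case less
    show ?case
    proof (cases "A = {}")
      case False
      then obtain x where x: "x \<in> A" by blast
      have minus_x: "- x \<in> A" using less.prems x by blast
      have "x \<noteq> - x"
      proof
        assume "x = - x"
        then have "2 *\<^sub>R x = 0" by (metis scaleR_2 eq_neg_iff_add_eq_0)
        then show False using x less.prems(3) by simp
      qed
      then have card_pair: "card {x, - x} = 2" by simp
      define B where "B = A - {x, - x}"
      have card_A: "card A = card B + 2"
        using less.prems(1) x minus_x card_pair card_mono[of A "{x, - x}"]
        unfolding B_def by (subst card_Diff_subset) auto
      have "even (card B)"
        using card_A less.prems by (intro less.hyps) (auto simp: B_def)
      then show ?thesis using card_A by simp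
    qed simp
  qed
qed simp

lemma linear_image_antipodal:
  assumes "linear f" and "\<forall>x\<in>S. - x \<in> S"
  shows "\<forall>y\<in>f ` S. - y \<in> f ` S"
  using assms by (auto simp: linear_neg[symmetric, OF assms(1)])

lemma Useq_antipodal:
  assumes "\<forall>j. 1 \<le> j \<and> j \<le> k \<longrightarrow> linear (gs j)" and "\<forall>x\<in>S. - x \<in> S"
  shows "\<forall>y\<in>Useq S gs k. - y \<in> Useq S gs k"
  using assms
proof (induction k)
  case (Suc k)
  then show ?case using linear_image_antipodal[of "gs (Suc k)" S] by auto
qed simp

lemma even_card_image_inter_Useq:
  assumes S_sub: "S \<subseteq> leech_min" and S_antipodal: "\<forall>x\<in>S. - x \<in> S"
    and g1: "gs 1 = id" and gs_Co0: "\<forall>j. 2 \<le> j \<and> j \<le> k \<longrightarrow> gs j \<in> Co0"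
    and g: "g \<in> Co0"
  shows "even (card (g ` S \<inter> Useq S gs k))"
proof (rule even_card_antipodal)
  have "\<forall>j. 1 \<le> j \<and> j \<le> k \<longrightarrow> linear (gs j)"
  proof (intro allI impI)
    fix j assume "1 \<le> j \<and> j \<le> k"
    then show "linear (gs j)"
      using g1 gs_Co0 by (cases "j = 1") (auto simp: Co0_def linear_id)
  qed
  then have "\<forall>y\<in>Useq S gs k. - y \<in> Useq S gs k"
    using S_antipodal by (rule Useq_antipodal)
  moreover have "\<forall>y\<in>g ` S. - y \<in> g ` S"
    using g S_antipodal by (intro linear_image_antipodal) (auto simp: Co0_def)
  ultimately show "\<forall>y\<in>g ` S \<inter> Useq S gs k. - y \<in> g ` S \<inter> Useq S gs k" by blast
  have "0 \<notin> S" using S_sub by (auto simp: leech_min_def)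
  then show "0 \<notin> g ` S \<inter> Useq S gs k"
    using g by (auto simp: Co0_def) (metis norm_eq_zero)
qed

lemma ceil_even_le_even:
  assumes "even m" and "x \<le> real_of_int m"
  shows "ceil_even x \<le> real_of_int m"
proof -
  obtain l where m: "m = 2 * l" using assms(1) by (auto elim: evenE)
  then have "\<lceil>x / 2\<rceil> \<le> l" using assms(2) by (simp add: ceiling_le_iff)
  then show ?thesis unfolding ceil_even_def m by simp
qed

lemma ceil_even_eq_or_gap_two:
  "ceil_even x = x \<or> ceil_even x - floor_even x = 2"
proof (cases "x / 2 \<in> \<int>")
  case True
  then obtain z where "x / 2 = of_int z" by (auto elim: Ints_cases)
  then show ?thesis unfolding ceil_even_def by simp
next
  case False
  then have "\<lceil>x / 2\<rceil> = \<lfloor>x / 2\<rfloor> + 1"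
    by (metis ceiling_altdef floor_of_int Ints_of_int)
  then show ?thesis unfolding ceil_even_def floor_even_def by simp
qed

lemma zero_sum_card_tradeoff:
  fixes f :: "'a \<Rightarrow> real"
  assumes "finite I" and "G \<subseteq> I" and "(\<Sum>i\<in>I. f i) = 0"
    and "\<forall>i\<in>G. - a \<le> f i" and "\<forall>i\<in>I - G. b \<le> f i"
  shows "(real (card I) - real (card G)) * b \<le> real (card G) * a"
proof -
  have "(real (card I) - real (card G)) * b = (\<Sum>i\<in>I - G. b)"
    using assms(1,2) by (simp add: card_Diff_subset finite_subset card_mono of_nat_diff)
  also have "\<dots> \<le> (\<Sum>i\<in>I - G. f i)" using assms(5) by (intro sum_mono) auto
  also have "\<dots> = - (\<Sum>i\<in>G. f i)"
    using assms(1-3) sum.subset_diff[of G I f] by simp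
  also have "\<dots> \<le> (\<Sum>i\<in>G. a)" using assms(4) sum_mono[of G "\<lambda>_. - a" f] by simp
  finally show ?thesis by simp
qed

lemma card_below_mean_ge:
  fixes c :: "'a \<Rightarrow> nat" and I :: "'a set"
  defines "E \<equiv> (\<Sum>i\<in>I. real (c i)) / real (card I)"
  assumes even: "\<forall>i\<in>I. even (c i)"
    and above_floor: "\<forall>i\<in>I. real (c i) < E \<longrightarrow> floor_even E \<le> real (c i)"
  shows "real (card I) / 2 * (ceil_even E - E) \<le> real (card {i\<in>I. real (c i) < E})"
proof (cases "card I = 0")
  case False
  define G where "G = {i\<in>I. real (c i) < E}"
  have fin: "finite I" using False by (meson card.infinite)
  have "(\<Sum>i\<in>I. real (c i) - E) = 0"
    using False by (simp add: sum_subtractf E_def)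
  moreover have "\<forall>i\<in>G. - (E - floor_even E) \<le> real (c i) - E"
    using above_floor by (auto simp: G_def)
  moreover have "\<forall>i\<in>I - G. ceil_even E - E \<le> real (c i) - E"
  proof
    fix i assume "i \<in> I - G"
    then have "even (int (c i))" and "E \<le> real_of_int (int (c i))"
      using even by (auto simp: G_def)
    then show "ceil_even E - E \<le> real (c i) - E"
      using ceil_even_le_even by fastforce
  qed
  ultimately have tradeoff:
    "(real (card I) - real (card G)) * (ceil_even E - E) \<le> real (card G) * (E - floor_even E)"
    using fin by (intro zero_sum_card_tradeoff) (auto simp: G_def)
  from ceil_even_eq_or_gap_two[of E] show ?thesis
  proof
    assume "ceil_even E - floor_even E = 2"
    then have "E - floor_even E = 2 - (ceil_even E - E)" by simp
    with tradeoff have "real (card I) * (ceil_even E - E) \<le> 2 * real (card G)"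
      by (simp add: algebra_simps)
    then show ?thesis by (simp add: G_def)
  qed simp
qed simp

theorem lemma4p9:
  fixes S :: "(real ^ 24) set" and gs :: "nat \<Rightarrow> real ^ 24 \<Rightarrow> real ^ 24" and k :: nat
  assumes S_sub: "S \<subseteq> leech_min"
    and S_antipodal: "\<forall>x\<in>S. - x \<in> S"
    and S_inner: "\<forall>x\<in>S. \<forall>y\<in>S. x \<noteq> y \<longrightarrow> inner x y \<le> 1"
    and k_pos: "k \<ge> 1"
    and g1: "gs 1 = id"
    and gs_Co0: "\<forall>j. 2 \<le> j \<and> j \<le> k \<longrightarrow> gs j \<in> Co0"
    and S_large: "\<forall>j. 2 \<le> j \<and> j \<le> k \<longrightarrow>
       real (card (Sseq S gs j)) \<ge>
         real (card S) * (1 - (\<Sum>i\<in>{1..<j}. real (card (Sseq S gs i))) / real (card leech_min))"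
    and max_hyp: "Max ((\<lambda>g. \<bar>delta S gs k g\<bar>) ` Gminus S gs k)
                    = Ek S gs k - floor_even (Ek S gs k)"
  shows "real (card (Gminus S gs k)) \<ge>
           real (card Co0) / 2 * (ceil_even (Ek S gs k) - Ek S gs k)"
proof -
  define c where "c g = card (g ` S \<inter> Useq S gs k)" for g
  have Ek_eq: "Ek S gs k = (\<Sum>g\<in>Co0. real (c g)) / real (card Co0)"
    by (simp add: Ek_def c_def)
  have G_eq: "Gminus S gs k = {g\<in>Co0. real (c g) < Ek S gs k}"
    by (auto simp: Gminus_def delta_def c_def)
  have "\<forall>g\<in>Co0. real (c g) < Ek S gs k \<longrightarrow> floor_even (Ek S gs k) \<le> real (c g)"
  proof (intro ballI impI)
    fix g assume "g \<in> Co0" and "real (c g) < Ek S gs k"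
    then have "g \<in> Gminus S gs k" by (simp add: G_eq)
    moreover have "card Co0 \<noteq> 0"
      using \<open>real (c g) < Ek S gs k\<close> by (cases "card Co0 = 0") (auto simp: Ek_def)
    then have "finite (Gminus S gs k)"
      by (simp add: Gminus_def card_gt_0_iff)
    ultimately have "\<bar>delta S gs k g\<bar> \<le> Ek S gs k - floor_even (Ek S gs k)"
      unfolding max_hyp[symmetric] by (intro Max_ge) auto
    then show "floor_even (Ek S gs k) \<le> real (c g)" by (simp add: delta_def c_def)
  qed
  moreover have "\<forall>g\<in>Co0. even (c g)"
    unfolding c_def using even_card_image_inter_Useq[OF S_sub S_antipodal g1 gs_Co0] by blast
  ultimately show ?thesis
    using card_below_mean_ge[of Co0 c] unfolding G_eq Ek_eq by blast
qed

end
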